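(* The following hold. (1) For every $n\ge 0$, the standard simplex $\Delta^n$ is acyclic. (2) If $X$ is an acyclic simplicial set and $Y\subset X$ is a subsimplicial set, then $Y$ is acyclic. (3) If $\{X_i\}_{i\in I}$ is a family of acyclic simplicial sets, then the product $\prod_{i\in I}X_i$ is acyclic. Consequently (together with (2)), the class of acyclic simplicial sets is closed under all limits in the category of simplicial sets. (4) If $\{X_i\}_{i\in I}$ is a family of acyclic simplicial sets, then the coproduct $\coprod_{i\in I}X_i$ is acyclic. (5) Let $X,Y,Z$ be simplicial sets with $Y$ and $Z$ acyclic, and let $f\colon X\to Y$ and $g\colon X\to Z$ be morphisms. Then the double mapping cylinder $Y\coprod_{X\times\{0\}}(X\times\Delta^1)\coprod_{X\times\{1\}}Z$ (glued along $f$ on $X\times\{0\}$ and along $g$ on $X\times\{1\}$) is acyclic. (6) If $X=\operatorname{colim}_{i\in I}X_i$ is a filtered colimit of simplicial sets and every $X_i$ is acyclic, then $X$ is acyclic.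
   Context: A (directed) graph is $G=(V,E,s,t)$ with sets $V,E$ and maps $s,t\colon E\to V$. A trail is a finite sequence $(e_1,\dots,e_n)$ of edges with $n\ge 1$ and $t(e_i)=s(e_{i+1})$ for $1\le i\le n-1$; it is closed if $s(e_1)=t(e_n)$. A graph is acyclic if it has no closed trail. For a simplicial set $X$, its associated graph $G_X$ has vertex set $X_0$, edge set the set of non-degenerate $1$-simplices of $X$, source $d_1$ and target $d_0$. A simplicial set $X$ is called acyclic if $G_X$ is acyclic (this is a purely combinatorial notion, unrelated to homology). *)

theory Defs
  imports Main "HOL-Library.FuncSet"
begin

definition closed_trail :: "'e set \<Rightarrow> ('e \<Rightarrow> 'v) \<Rightarrow> ('e \<Rightarrow> 'v) \<Rightarrow> 'e list \<Rightarrow> bool" where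
  "closed_trail E src tgt es \<longleftrightarrow>
     es \<noteq> [] \<and> set es \<subseteq> E \<and>
     (\<forall>i. Suc i < length es \<longrightarrow> tgt (es ! i) = src (es ! Suc i)) \<and>
     src (hd es) = tgt (last es)"

definition graph_acyclic :: "'v set \<Rightarrow> 'e set \<Rightarrow> ('e \<Rightarrow> 'v) \<Rightarrow> ('e \<Rightarrow> 'v) \<Rightarrow> bool" where
  "graph_acyclic V E src tgt \<longleftrightarrow> \<not> (\<exists>es. closed_trail E src tgt es)"

text \<open>A morphism [m] \<rightarrow> [n] of \<Delta> is represented by the list of its values
  (a sorted list of length m+1 with entries \<le> n).\<close>

definition mono_map :: "nat \<Rightarrow> nat \<Rightarrow> nat list \<Rightarrow> bool" where
  "mono_map m n \<theta> \<longleftrightarrow> length \<theta> = Suc m \<and> sorted \<theta> \<and> (\<forall>j\<in>set \<theta>. j \<le> n)"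

text \<open>dcomp \<theta> \<psi> is the composite \<theta> \<circ> \<psi> (first \<psi>, then \<theta>).\<close>
definition dcomp :: "nat list \<Rightarrow> nat list \<Rightarrow> nat list" where
  "dcomp \<theta> \<psi> = map (\<lambda>j. \<theta> ! j) \<psi>"

text \<open>A simplicial set: sets of n-simplices cells n, and for x an n-simplex and
  \<theta> : [m] \<rightarrow> [n] the simplicial operator act n \<theta> x (an m-simplex).\<close>

record 'a sset =
  cells :: "nat \<Rightarrow> 'a set"
  act :: "nat \<Rightarrow> nat list \<Rightarrow> 'a \<Rightarrow> 'a"

definition is_sset :: "'a sset \<Rightarrow> bool" where
  "is_sset X \<longleftrightarrow>
     (\<forall>n m \<theta> x. mono_map m n \<theta> \<and> x \<in> cells X n \<longrightarrow> act X n \<theta> x \<in> cells X m) \<and>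
     (\<forall>n x. x \<in> cells X n \<longrightarrow> act X n [0..<Suc n] x = x) \<and>
     (\<forall>n m k \<theta> \<psi> x. mono_map m n \<theta> \<and> mono_map k m \<psi> \<and> x \<in> cells X n \<longrightarrow>
        act X m \<psi> (act X n \<theta> x) = act X n (dcomp \<theta> \<psi>) x)"

definition sset_hom :: "'a sset \<Rightarrow> 'b sset \<Rightarrow> (nat \<Rightarrow> 'a \<Rightarrow> 'b) \<Rightarrow> bool" where
  "sset_hom X Y f \<longleftrightarrow>
     (\<forall>n x. x \<in> cells X n \<longrightarrow> f n x \<in> cells Y n) \<and>
     (\<forall>n m \<theta> x. mono_map m n \<theta> \<and> x \<in> cells X n \<longrightarrow>
        f m (act X n \<theta> x) = act Y n \<theta> (f n x))"

definition sub_sset :: "'a sset \<Rightarrow> 'a sset \<Rightarrow> bool" where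
  "sub_sset Y X \<longleftrightarrow>
     (\<forall>n. cells Y n \<subseteq> cells X n) \<and>
     (\<forall>n m \<theta> y. mono_map m n \<theta> \<and> y \<in> cells Y n \<longrightarrow>
        act X n \<theta> y \<in> cells Y m \<and> act Y n \<theta> y = act X n \<theta> y)"

text \<open>Degeneracy s_0 : X_0 \<rightarrow> X_1 is induced by [1] \<rightarrow> [0] = [0,0];
  d_1 by [0] \<rightarrow> [1] = [0] and d_0 by [0] \<rightarrow> [1] = [1].\<close>

definition nondeg_edges :: "'a sset \<Rightarrow> 'a set" where
  "nondeg_edges X = cells X 1 - act X 0 [0, 0] ` cells X 0"

definition sset_acyclic :: "'a sset \<Rightarrow> bool" where
  "sset_acyclic X \<longleftrightarrow> graph_acyclic (cells X 0) (nondeg_edges X) (act X 1 [0]) (act X 1 [1])"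

definition stdsimplex :: "nat \<Rightarrow> nat list sset" where
  "stdsimplex n = \<lparr> cells = (\<lambda>m. {\<theta>. mono_map m n \<theta>}), act = (\<lambda>m \<psi> \<theta>. dcomp \<theta> \<psi>) \<rparr>"

definition prod_sset :: "'i set \<Rightarrow> ('i \<Rightarrow> 'a sset) \<Rightarrow> ('i \<Rightarrow> 'a) sset" where
  "prod_sset I X = \<lparr> cells = (\<lambda>n. PiE I (\<lambda>i. cells (X i) n)),
                     act = (\<lambda>n \<theta> f. restrict (\<lambda>i. act (X i) n \<theta> (f i)) I) \<rparr>"

definition coprod_sset :: "'i set \<Rightarrow> ('i \<Rightarrow> 'a sset) \<Rightarrow> ('i \<times> 'a) sset" where
  "coprod_sset I X = \<lparr> cells = (\<lambda>n. Sigma I (\<lambda>i. cells (X i) n)),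
                       act = (\<lambda>n \<theta> p. (fst p, act (X (fst p)) n \<theta> (snd p))) \<rparr>"

definition prod2_sset :: "'a sset \<Rightarrow> 'b sset \<Rightarrow> ('a \<times> 'b) sset" where
  "prod2_sset X Y = \<lparr> cells = (\<lambda>n. cells X n \<times> cells Y n),
                      act = (\<lambda>n \<theta> p. (act X n \<theta> (fst p), act Y n \<theta> (snd p))) \<rparr>"

definition coprod2_sset :: "'a sset \<Rightarrow> 'b sset \<Rightarrow> ('a + 'b) sset" where
  "coprod2_sset X Y = \<lparr> cells = (\<lambda>n. Inl ` cells X n \<union> Inr ` cells Y n),
                        act = (\<lambda>n \<theta> p. case p of Inl x \<Rightarrow> Inl (act X n \<theta> x)
                                                | Inr y \<Rightarrow> Inr (act Y n \<theta> y)) \<rparr>"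

definition equiv_closure_on :: "'a set \<Rightarrow> ('a \<times> 'a) set \<Rightarrow> ('a \<times> 'a) set" where
  "equiv_closure_on S r = Id_on S \<union> (r \<union> r\<inverse>)\<^sup>+"

definition quot_sset :: "'a sset \<Rightarrow> (nat \<Rightarrow> ('a \<times> 'a) set) \<Rightarrow> 'a set sset" where
  "quot_sset W R = \<lparr> cells = (\<lambda>n. cells W n // equiv_closure_on (cells W n) (R n)),
     act = (\<lambda>n \<theta> c. equiv_closure_on (cells W (length \<theta> - 1)) (R (length \<theta> - 1))
                        `` {act W n \<theta> (SOME x. x \<in> c)}) \<rparr>"

text \<open>Double mapping cylinder Y \<union>_{X\<times>{0}} (X \<times> \<Delta>^1) \<union>_{X\<times>{1}} Z
  of f : X \<rightarrow> Y and g : X \<rightarrow> Z.\<close>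

definition dmcyl_sset :: "'x sset \<Rightarrow> 'y sset \<Rightarrow> 'z sset \<Rightarrow> (nat \<Rightarrow> 'x \<Rightarrow> 'y) \<Rightarrow> (nat \<Rightarrow> 'x \<Rightarrow> 'z)
     \<Rightarrow> ('y + ('x \<times> nat list) + 'z) set sset" where
  "dmcyl_sset X Y Z f g =
     quot_sset (coprod2_sset Y (coprod2_sset (prod2_sset X (stdsimplex 1)) Z))
       (\<lambda>n. {(Inr (Inl (x, replicate (Suc n) 0)), Inl (f n x)) | x. x \<in> cells X n}
          \<union> {(Inr (Inl (x, replicate (Suc n) 1)), Inr (Inr (g n x))) | x. x \<in> cells X n})"

record ('o, 'm) small_cat =
  c_obj :: "'o set"
  c_arr :: "'m set"
  c_dom :: "'m \<Rightarrow> 'o"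
  c_cod :: "'m \<Rightarrow> 'o"
  c_id :: "'o \<Rightarrow> 'm"
  c_comp :: "'m \<Rightarrow> 'm \<Rightarrow> 'm"  \<comment> \<open>c_comp v u = v \<circ> u\<close>

definition is_cat :: "('o, 'm) small_cat \<Rightarrow> bool" where
  "is_cat C \<longleftrightarrow>
     (\<forall>u\<in>c_arr C. c_dom C u \<in> c_obj C \<and> c_cod C u \<in> c_obj C) \<and>
     (\<forall>i\<in>c_obj C. c_id C i \<in> c_arr C \<and> c_dom C (c_id C i) = i \<and> c_cod C (c_id C i) = i) \<and>
     (\<forall>u\<in>c_arr C. \<forall>v\<in>c_arr C. c_cod C u = c_dom C v \<longrightarrow>
        c_comp C v u \<in> c_arr C \<and> c_dom C (c_comp C v u) = c_dom C u \<and>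
        c_cod C (c_comp C v u) = c_cod C v) \<and>
     (\<forall>u\<in>c_arr C. c_comp C u (c_id C (c_dom C u)) = u \<and> c_comp C (c_id C (c_cod C u)) u = u) \<and>
     (\<forall>u\<in>c_arr C. \<forall>v\<in>c_arr C. \<forall>w\<in>c_arr C. c_cod C u = c_dom C v \<and> c_cod C v = c_dom C w \<longrightarrow>
        c_comp C w (c_comp C v u) = c_comp C (c_comp C w v) u)"

definition filtered_cat :: "('o, 'm) small_cat \<Rightarrow> bool" where
  "filtered_cat C \<longleftrightarrow>
     c_obj C \<noteq> {} \<and>
     (\<forall>i\<in>c_obj C. \<forall>j\<in>c_obj C. \<exists>k\<in>c_obj C. \<exists>u\<in>c_arr C. \<exists>v\<in>c_arr C.
        c_dom C u = i \<and> c_cod C u = k \<and> c_dom C v = j \<and> c_cod C v = k) \<and>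
     (\<forall>u\<in>c_arr C. \<forall>v\<in>c_arr C. c_dom C u = c_dom C v \<and> c_cod C u = c_cod C v \<longrightarrow>
        (\<exists>w\<in>c_arr C. c_dom C w = c_cod C u \<and> c_comp C w u = c_comp C w v))"

definition sset_diagram :: "('o, 'm) small_cat \<Rightarrow> ('o \<Rightarrow> 'a sset) \<Rightarrow> ('m \<Rightarrow> nat \<Rightarrow> 'a \<Rightarrow> 'a) \<Rightarrow> bool" where
  "sset_diagram C D F \<longleftrightarrow>
     (\<forall>i\<in>c_obj C. is_sset (D i)) \<and>
     (\<forall>u\<in>c_arr C. sset_hom (D (c_dom C u)) (D (c_cod C u)) (F u)) \<and>
     (\<forall>i\<in>c_obj C. \<forall>n x. x \<in> cells (D i) n \<longrightarrow> F (c_id C i) n x = x) \<and>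
     (\<forall>u\<in>c_arr C. \<forall>v\<in>c_arr C. c_cod C u = c_dom C v \<longrightarrow>
        (\<forall>n x. x \<in> cells (D (c_dom C u)) n \<longrightarrow> F (c_comp C v u) n x = F v n (F u n x)))"

definition lim_sset :: "('o, 'm) small_cat \<Rightarrow> ('o \<Rightarrow> 'a sset) \<Rightarrow> ('m \<Rightarrow> nat \<Rightarrow> 'a \<Rightarrow> 'a) \<Rightarrow> ('o \<Rightarrow> 'a) sset" where
  "lim_sset C D F = \<lparr> cells = (\<lambda>n. {s \<in> cells (prod_sset (c_obj C) D) n.
                                      \<forall>u\<in>c_arr C. F u n (s (c_dom C u)) = s (c_cod C u)}),
                      act = act (prod_sset (c_obj C) D) \<rparr>"

definition colim_sset :: "('o, 'm) small_cat \<Rightarrow> ('o \<Rightarrow> 'a sset) \<Rightarrow> ('m \<Rightarrow> nat \<Rightarrow> 'a \<Rightarrow> 'a) \<Rightarrow> ('o \<times> 'a) set sset" where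
  "colim_sset C D F = quot_sset (coprod_sset (c_obj C) D)
     (\<lambda>n. {((c_dom C u, x), (c_cod C u, F u n x)) | u x. u \<in> c_arr C \<and> x \<in> cells (D (c_dom C u)) n})"

end

(*
  A closed trail in G_X starting with a nondegenerate edge e is the same as a path of arbitrary
  1-simplices from d_0 e back to d_1 e, since degenerate edges are loops; so acyclicity only
  concerns the relation "joined by a nondegenerate edge" on vertices.

  Along a nondegenerate edge of Delta^n the first vertex strictly increases. A subsimplicial set
  has fewer nondegenerate edges. A nondegenerate edge of a product is nondegenerate in some
  coordinate, and projecting to that coordinate transports the closing path; limits are
  subsimplicial sets of products. Coproducts are disjoint unions of graphs.

  In the double mapping cylinder every vertex is glued to Y or to Z. Collapsing the cylinder
  sends each nondegenerate edge into G_Y, into G_Z, or from a vertex of Y to a vertex of Z, so a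
  cycle would produce one in G_Y or in G_Z.

  In a filtered colimit, a cycle through the class of a nondegenerate edge e of D_i lifts to a
  single stage: the closing path lifts edge by edge, its two ends become equal at a later stage
  D_k by filteredness, and the image of e in D_k stays nondegenerate, giving a cycle in D_k.
*)

theory Submission
  imports Defs
begin

section \<open>Acyclic relations and trails\<close>

definition edge_rel :: "'e set \<Rightarrow> ('e \<Rightarrow> 'v) \<Rightarrow> ('e \<Rightarrow> 'v) \<Rightarrow> ('v \<times> 'v) set" where
  "edge_rel E s t = (\<lambda>e. (s e, t e)) ` E"

definition trail :: "'e set \<Rightarrow> ('e \<Rightarrow> 'v) \<Rightarrow> ('e \<Rightarrow> 'v) \<Rightarrow> 'e list \<Rightarrow> bool" where
  "trail E s t es \<longleftrightarrow> es \<noteq> [] \<and> set es \<subseteq> E \<and> successively (\<lambda>e e'. t e = s e') es"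

lemma closed_trail_iff_trail:
  "closed_trail E s t es \<longleftrightarrow> trail E s t es \<and> s (hd es) = t (last es)"
  by (auto simp: closed_trail_def trail_def successively_conv_nth)

lemma trail_imp_trancl:
  "trail E s t es \<Longrightarrow> (s (hd es), t (last es)) \<in> (edge_rel E s t)\<^sup>+"
proof (induction es)
  case (Cons e es)
  have e: "(s e, t e) \<in> edge_rel E s t"
    using Cons.prems by (auto simp: trail_def edge_rel_def)
  show ?case
  proof (cases "es = []")
    case False
    with Cons.prems have "t e = s (hd es)" "trail E s t es"
      by (auto simp: trail_def successively_Cons)
    with Cons.IH e False show ?thesis by (auto intro: trancl_into_trancl2)
  qed (use e in simp)
qed (simp add: trail_def)

lemma trancl_imp_trail:
  "(a, b) \<in> (edge_rel E s t)\<^sup>+ \<Longrightarrow> \<exists>es. trail E s t es \<and> s (hd es) = a \<and> t (last es) = b"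
proof (induction rule: converse_trancl_induct)
  case (base a)
  then obtain e where "e \<in> E" "a = s e" "b = t e" by (auto simp: edge_rel_def)
  then show ?case by (intro exI[of _ "[e]"]) (simp add: trail_def)
next
  case (step a a')
  then obtain e where e: "e \<in> E" "a = s e" "a' = t e" by (auto simp: edge_rel_def)
  obtain es where es: "trail E s t es" "s (hd es) = a'" "t (last es) = b"
    using step.IH by blast
  have "trail E s t (e # es)"
    using e es(1,2) by (simp add: trail_def successively_Cons)
  then show ?case
    using e es by (intro exI[of _ "e # es"]) (simp add: trail_def)
qed

lemma graph_acyclic_iff_acyclic: "graph_acyclic V E s t \<longleftrightarrow> acyclic (edge_rel E s t)"
proof
  assume acyc: "graph_acyclic V E s t"
  show "acyclic (edge_rel E s t)"
  proof (rule acyclicI, intro allI notI)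
    fix v assume "(v, v) \<in> (edge_rel E s t)\<^sup>+"
    then obtain es where "trail E s t es" "s (hd es) = v" "t (last es) = v"
      by (blast dest: trancl_imp_trail)
    then have "closed_trail E s t es" by (simp add: closed_trail_iff_trail)
    with acyc show False by (auto simp: graph_acyclic_def)
  qed
next
  assume acyc: "acyclic (edge_rel E s t)"
  show "graph_acyclic V E s t"
    unfolding graph_acyclic_def
  proof
    assume "\<exists>es. closed_trail E s t es"
    then obtain es where es: "trail E s t es" "s (hd es) = t (last es)"
      by (auto simp: closed_trail_iff_trail)
    with trail_imp_trancl[OF es(1)] acyc show False by (simp add: acyclic_def)
  qed
qed

lemma acyclic_iff_no_return: "acyclic r \<longleftrightarrow> (\<forall>(a, b) \<in> r. (b, a) \<notin> r\<^sup>*)"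
proof
  assume acyc: "acyclic r"
  have "(b, a) \<notin> r\<^sup>*" if ab: "(a, b) \<in> r" for a b
    using rtrancl_into_trancl2[OF ab] acyc by (auto simp: acyclic_def)
  then show "\<forall>(a, b) \<in> r. (b, a) \<notin> r\<^sup>*" by blast
next
  assume "\<forall>(a, b) \<in> r. (b, a) \<notin> r\<^sup>*"
  then show "acyclic r"
    by (auto simp: acyclic_def dest: tranclD)
qed

lemma acyclic_inv_image:
  assumes "acyclic r"
  shows "acyclic (inv_image r f)"
proof -
  have "(f a, f b) \<in> r\<^sup>+" if "(a, b) \<in> (inv_image r f)\<^sup>+" for a b
    using that by induction (auto intro: trancl_into_trancl)
  with assms show ?thesis by (auto simp: acyclic_def)
qed

lemma acyclic_trancl: "acyclic (r\<^sup>+) \<longleftrightarrow> acyclic r"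
  by (simp add: acyclic_def)

lemma acyclic_if_edges_in_trancl_image:
  assumes "acyclic T" "\<And>a b. (a, b) \<in> r \<Longrightarrow> (f a, f b) \<in> T\<^sup>+"
  shows "acyclic r"
proof (rule acyclic_subset)
  show "acyclic (inv_image (T\<^sup>+) f)"
    using assms(1) by (simp add: acyclic_inv_image acyclic_trancl)
  show "r \<subseteq> inv_image (T\<^sup>+) f"
    using assms(2) by auto
qed

section \<open>The graph of a simplicial set\<close>

abbreviation src_face :: "'a sset \<Rightarrow> 'a \<Rightarrow> 'a" where
  "src_face X \<equiv> act X 1 [0]"

abbreviation tgt_face :: "'a sset \<Rightarrow> 'a \<Rightarrow> 'a" where
  "tgt_face X \<equiv> act X 1 [1]"

abbreviation degen_edge :: "'a sset \<Rightarrow> 'a \<Rightarrow> 'a" where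
  "degen_edge X \<equiv> act X 0 [0, 0]"

definition graph_rel :: "'a sset \<Rightarrow> ('a \<times> 'a) set" where
  "graph_rel X = edge_rel (nondeg_edges X) (src_face X) (tgt_face X)"

definition simplex1_rel :: "'a sset \<Rightarrow> ('a \<times> 'a) set" where
  "simplex1_rel X = edge_rel (cells X 1) (src_face X) (tgt_face X)"

lemma sset_acyclic_iff_acyclic: "sset_acyclic X \<longleftrightarrow> acyclic (graph_rel X)"
  by (simp add: sset_acyclic_def graph_rel_def graph_acyclic_iff_acyclic)

lemma graph_relE:
  assumes "(a, b) \<in> graph_rel X"
  obtains e where "e \<in> cells X 1" "e \<notin> degen_edge X ` cells X 0"
    "a = src_face X e" "b = tgt_face X e"
  using assms by (auto simp: graph_rel_def edge_rel_def nondeg_edges_def)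

lemma graph_relI:
  "e \<in> cells X 1 \<Longrightarrow> e \<notin> degen_edge X ` cells X 0 \<Longrightarrow> (src_face X e, tgt_face X e) \<in> graph_rel X"
  by (auto simp: graph_rel_def edge_rel_def nondeg_edges_def)

lemma mono_map_src: "mono_map 0 1 [0]"
  and mono_map_tgt: "mono_map 0 1 [1]"
  and mono_map_degen: "mono_map 1 0 [0, 0]"
  by (simp_all add: mono_map_def)

lemma sset_act_closed:
  "is_sset X \<Longrightarrow> mono_map m n \<theta> \<Longrightarrow> x \<in> cells X n \<Longrightarrow> act X n \<theta> x \<in> cells X m"
  unfolding is_sset_def by (elim conjE) blast

lemma sset_faces_closed:
  assumes "is_sset X" "e \<in> cells X 1"
  shows "src_face X e \<in> cells X 0" "tgt_face X e \<in> cells X 0"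
  using assms mono_map_src mono_map_tgt by (auto intro: sset_act_closed)

lemma sset_act_id: "is_sset X \<Longrightarrow> x \<in> cells X n \<Longrightarrow> act X n [0..<Suc n] x = x"
  unfolding is_sset_def by (elim conjE) blast

lemma sset_act_comp:
  "is_sset X \<Longrightarrow> mono_map m n \<theta> \<Longrightarrow> mono_map k m \<psi> \<Longrightarrow> x \<in> cells X n \<Longrightarrow>
     act X m \<psi> (act X n \<theta> x) = act X n (dcomp \<theta> \<psi>) x"
  unfolding is_sset_def by (elim conjE) blast

lemma sset_faces_degen_edge:
  assumes "is_sset X" "v \<in> cells X 0"
  shows "src_face X (degen_edge X v) = v" "tgt_face X (degen_edge X v) = v"
proof -
  have "act X 0 [0] v = v" using sset_act_id[OF assms] by simp
  then show "src_face X (degen_edge X v) = v" "tgt_face X (degen_edge X v) = v"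
    using sset_act_comp[OF assms(1) mono_map_degen _ assms(2)] mono_map_src mono_map_tgt
    by (simp_all add: dcomp_def)
qed

lemma graph_rel_subset_simplex1_rel: "graph_rel X \<subseteq> simplex1_rel X"
  by (auto simp: graph_rel_def simplex1_rel_def edge_rel_def nondeg_edges_def)

lemma simplex1_rel_subset_graph_rel:
  assumes "is_sset X"
  shows "simplex1_rel X \<subseteq> (graph_rel X)\<^sup>="
proof
  fix p assume "p \<in> simplex1_rel X"
  then obtain e where e: "e \<in> cells X 1" "p = (src_face X e, tgt_face X e)"
    by (auto simp: simplex1_rel_def edge_rel_def)
  show "p \<in> (graph_rel X)\<^sup>="
  proof (cases "e \<in> degen_edge X ` cells X 0")
    case True
    then show ?thesis using e(2) sset_faces_degen_edge[OF assms] by auto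
  qed (use e graph_relI in auto)
qed

lemma rtrancl_simplex1_rel:
  assumes "is_sset X"
  shows "(simplex1_rel X)\<^sup>* = (graph_rel X)\<^sup>*"
proof
  show "(simplex1_rel X)\<^sup>* \<subseteq> (graph_rel X)\<^sup>*"
    using rtrancl_mono[OF simplex1_rel_subset_graph_rel[OF assms]] by simp
  show "(graph_rel X)\<^sup>* \<subseteq> (simplex1_rel X)\<^sup>*"
    using graph_rel_subset_simplex1_rel by (rule rtrancl_mono)
qed

lemma sset_acyclic_iff_no_return:
  "is_sset X \<Longrightarrow> sset_acyclic X \<longleftrightarrow>
     (\<forall>e\<in>nondeg_edges X. (tgt_face X e, src_face X e) \<notin> (simplex1_rel X)\<^sup>*)"
  unfolding sset_acyclic_iff_acyclic acyclic_iff_no_return rtrancl_simplex1_rel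
  by (simp add: graph_rel_def edge_rel_def)

lemma sset_hom_rtrancl_simplex1_rel:
  assumes "sset_hom X Y f" "(a, b) \<in> (simplex1_rel X)\<^sup>*"
  shows "(f 0 a, f 0 b) \<in> (simplex1_rel Y)\<^sup>*"
  using assms(2)
proof (induction rule: rtrancl_induct)
  case (step b c)
  then obtain e where "e \<in> cells X 1" "b = src_face X e" "c = tgt_face X e"
    by (auto simp: simplex1_rel_def edge_rel_def)
  moreover have "f 1 e \<in> cells Y 1" "f 0 (src_face X e) = src_face Y (f 1 e)"
    "f 0 (tgt_face X e) = tgt_face Y (f 1 e)"
    using assms(1) \<open>e \<in> cells X 1\<close> mono_map_src mono_map_tgt unfolding sset_hom_def by blast+
  ultimately have "(f 0 b, f 0 c) \<in> simplex1_rel Y"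
    by (auto simp: simplex1_rel_def edge_rel_def)
  with step.IH show ?case by (rule rtrancl_into_rtrancl)
qed simp

section \<open>Standard simplices and subsimplicial sets\<close>

lemma mono_map_1E:
  assumes "mono_map 1 n e"
  obtains a b where "e = [a, b]" "a \<le> b" "b \<le> n"
proof -
  from assms have "length e = 2" "sorted e" "\<forall>j\<in>set e. j \<le> n" by (auto simp: mono_map_def)
  then show thesis using that by (cases e; cases "tl e"; auto simp: numeral_2_eq_2)
qed

lemma acyclic_stdsimplex: "sset_acyclic (stdsimplex n)"
  unfolding sset_acyclic_iff_acyclic
proof (rule acyclic_if_edges_in_trancl_image[where f = hd])
  show "acyclic less_than" by (rule wf_acyclic[OF wf_less_than])
next
  fix p q assume "(p, q) \<in> graph_rel (stdsimplex n)"
  then obtain e where e: "mono_map 1 n e" "p = dcomp e [0]" "q = dcomp e [1]"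
    and nd: "e \<notin> (\<lambda>v. dcomp v [0, 0]) ` {v. mono_map 0 n v}"
    by (auto simp: stdsimplex_def elim: graph_relE)
  obtain a b where ab: "e = [a, b]" "a \<le> b" "b \<le> n" using e(1) by (rule mono_map_1E)
  have "a \<noteq> b"
  proof
    assume "a = b"
    then have "e = dcomp [a] [0, 0]" "mono_map 0 n [a]" using ab by (auto simp: dcomp_def mono_map_def)
    then show False using nd by blast
  qed
  then show "(hd p, hd q) \<in> less_than\<^sup>+" using e ab by (auto simp: dcomp_def)
qed

lemma graph_rel_sub_sset:
  assumes "is_sset X" "sub_sset Y X"
  shows "graph_rel Y \<subseteq> graph_rel X"
proof (rule subrelI)
  fix a b assume "(a, b) \<in> graph_rel Y"
  then obtain e where e: "e \<in> cells Y 1" "e \<notin> degen_edge Y ` cells Y 0"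
    and ab: "a = src_face Y e" "b = tgt_face Y e" by (rule graph_relE)
  have eX: "e \<in> cells X 1" using e(1) assms(2) by (auto simp: sub_sset_def)
  have faces: "src_face Y e = src_face X e" "tgt_face Y e = tgt_face X e"
    using assms(2) e(1) mono_map_src mono_map_tgt by (auto simp: sub_sset_def)
  have "e \<notin> degen_edge X ` cells X 0"
  proof
    assume "e \<in> degen_edge X ` cells X 0"
    then obtain v where v: "v \<in> cells X 0" "e = degen_edge X v" by blast
    then have "v = src_face X e" using sset_faces_degen_edge[OF assms(1) v(1)] by simp
    then have vY: "v \<in> cells Y 0" using assms(2) e(1) mono_map_src by (auto simp: sub_sset_def)
    then have "degen_edge Y v = e" using assms(2) mono_map_degen v by (auto simp: sub_sset_def)
    then show False using e(2) vY by blast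
  qed
  then show "(a, b) \<in> graph_rel X" using graph_relI[OF eX] ab faces by simp
qed

lemma sset_acyclic_sub_sset:
  "is_sset X \<Longrightarrow> sset_acyclic X \<Longrightarrow> sub_sset Y X \<Longrightarrow> sset_acyclic Y"
  unfolding sset_acyclic_iff_acyclic by (metis acyclic_subset graph_rel_sub_sset)

section \<open>Products and limits\<close>

lemma sset_hom_prod_proj: "i \<in> I \<Longrightarrow> sset_hom (prod_sset I X) (X i) (\<lambda>n x. x i)"
  by (auto simp: sset_hom_def prod_sset_def)

lemma nondeg_edges_prod:
  assumes "e \<in> nondeg_edges (prod_sset I X)"
  shows "\<exists>i\<in>I. e i \<in> nondeg_edges (X i)"
proof (rule ccontr)
  assume "\<not> (\<exists>i\<in>I. e i \<in> nondeg_edges (X i))"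
  moreover have e: "e \<in> PiE I (\<lambda>i. cells (X i) 1)"
    using assms by (auto simp: nondeg_edges_def prod_sset_def)
  ultimately have "\<forall>i\<in>I. \<exists>v. v \<in> cells (X i) 0 \<and> e i = degen_edge (X i) v"
    by (auto simp: nondeg_edges_def)
  then obtain v where v: "\<forall>i\<in>I. v i \<in> cells (X i) 0 \<and> e i = degen_edge (X i) (v i)" by metis
  have "restrict v I \<in> cells (prod_sset I X) 0" using v by (auto simp: prod_sset_def)
  moreover have "degen_edge (prod_sset I X) (restrict v I) = e"
    using v e by (auto simp: prod_sset_def PiE_def extensional_def)
  ultimately show False using assms by (auto simp: nondeg_edges_def)
qed

lemma sset_acyclic_prod:
  assumes "\<forall>i\<in>I. is_sset (X i) \<and> sset_acyclic (X i)"
  shows "sset_acyclic (prod_sset I X)"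
  unfolding sset_acyclic_iff_acyclic acyclic_iff_no_return
proof (clarify)
  fix a b assume ab: "(a, b) \<in> graph_rel (prod_sset I X)" and ba: "(b, a) \<in> (graph_rel (prod_sset I X))\<^sup>*"
  from ab obtain e where e: "e \<in> nondeg_edges (prod_sset I X)"
    "a = src_face (prod_sset I X) e" "b = tgt_face (prod_sset I X) e"
    by (auto simp: graph_rel_def edge_rel_def)
  obtain i where i: "i \<in> I" "e i \<in> nondeg_edges (X i)" using nondeg_edges_prod[OF e(1)] by blast
  have "(b, a) \<in> (simplex1_rel (prod_sset I X))\<^sup>*"
    using ba rtrancl_mono[OF graph_rel_subset_simplex1_rel] by blast
  then have "(b i, a i) \<in> (simplex1_rel (X i))\<^sup>*"
    using sset_hom_rtrancl_simplex1_rel[OF sset_hom_prod_proj[OF i(1)]] by blast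
  moreover have "b i = tgt_face (X i) (e i)" "a i = src_face (X i) (e i)"
    using e i by (auto simp: prod_sset_def)
  ultimately show False using assms i sset_acyclic_iff_no_return[of "X i"] by auto
qed

lemma is_sset_prod:
  assumes "\<forall>i\<in>I. is_sset (X i)"
  shows "is_sset (prod_sset I X)"
  unfolding is_sset_def
proof (intro conjI allI impI)
  fix n m \<theta> x assume "mono_map m n \<theta> \<and> x \<in> cells (prod_sset I X) n"
  then show "act (prod_sset I X) n \<theta> x \<in> cells (prod_sset I X) m"
    using assms sset_act_closed by (fastforce simp: prod_sset_def)
next
  fix n x assume "x \<in> cells (prod_sset I X) n"
  then show "act (prod_sset I X) n [0..<Suc n] x = x"
    using assms sset_act_id by (fastforce simp: prod_sset_def PiE_def extensional_def)
next
  fix n m k \<theta> \<psi> x assume "mono_map m n \<theta> \<and> mono_map k m \<psi> \<and> x \<in> cells (prod_sset I X) n"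
  then show "act (prod_sset I X) m \<psi> (act (prod_sset I X) n \<theta> x) = act (prod_sset I X) n (dcomp \<theta> \<psi>) x"
    using assms sset_act_comp by (fastforce simp: prod_sset_def)
qed

lemma sub_sset_lim:
  assumes "is_cat C" "sset_diagram C D F"
  shows "sub_sset (lim_sset C D F) (prod_sset (c_obj C) D)"
  unfolding sub_sset_def
proof (intro conjI allI impI)
  fix n m \<theta> s assume "mono_map m n \<theta> \<and> s \<in> cells (lim_sset C D F) n"
  then have \<theta>: "mono_map m n \<theta>" and s: "s \<in> cells (lim_sset C D F) n" by simp_all
  have "F u m (act (D (c_dom C u)) n \<theta> (s (c_dom C u))) = act (D (c_cod C u)) n \<theta> (s (c_cod C u))"
    if u: "u \<in> c_arr C" for u
  proof -
    have "s (c_dom C u) \<in> cells (D (c_dom C u)) n" "F u n (s (c_dom C u)) = s (c_cod C u)"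
      using s u assms(1) by (auto simp: lim_sset_def prod_sset_def is_cat_def)
    then show ?thesis using assms(2) u \<theta> by (auto simp: sset_diagram_def sset_hom_def)
  qed
  then show "act (prod_sset (c_obj C) D) n \<theta> s \<in> cells (lim_sset C D F) m"
    using s \<theta> assms unfolding lim_sset_def
    by (auto simp: prod_sset_def is_cat_def sset_diagram_def intro: sset_act_closed)
qed (simp_all add: lim_sset_def)

lemma sset_acyclic_lim:
  assumes "is_cat C" "sset_diagram C D F" "\<forall>i\<in>c_obj C. sset_acyclic (D i)"
  shows "sset_acyclic (lim_sset C D F)"
proof (rule sset_acyclic_sub_sset[OF _ _ sub_sset_lim[OF assms(1,2)]])
  have "\<forall>i\<in>c_obj C. is_sset (D i)" using assms(2) by (simp add: sset_diagram_def)
  then show "is_sset (prod_sset (c_obj C) D)" "sset_acyclic (prod_sset (c_obj C) D)"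
    using assms(3) by (simp_all add: is_sset_prod sset_acyclic_prod)
qed

section \<open>Coproducts\<close>

lemma graph_rel_coprodD:
  assumes "(p, q) \<in> graph_rel (coprod_sset I X)"
  shows "fst p = fst q \<and> fst p \<in> I \<and> (snd p, snd q) \<in> graph_rel (X (fst p))"
proof -
  from assms obtain i x where e: "(i, x) \<in> cells (coprod_sset I X) 1"
    "(i, x) \<notin> degen_edge (coprod_sset I X) ` cells (coprod_sset I X) 0"
    "p = src_face (coprod_sset I X) (i, x)" "q = tgt_face (coprod_sset I X) (i, x)"
    by (metis graph_relE surj_pair)
  have x: "i \<in> I" "x \<in> cells (X i) 1" "p = (i, src_face (X i) x)" "q = (i, tgt_face (X i) x)"
    using e(1,3,4) by (auto simp: coprod_sset_def)
  have "x \<notin> degen_edge (X i) ` cells (X i) 0"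
  proof
    assume "x \<in> degen_edge (X i) ` cells (X i) 0"
    then obtain v where "v \<in> cells (X i) 0" "x = degen_edge (X i) v" by blast
    then have "(i, v) \<in> cells (coprod_sset I X) 0" "(i, x) = degen_edge (coprod_sset I X) (i, v)"
      using e(1) by (auto simp: coprod_sset_def)
    then show False using e(2) by blast
  qed
  with graph_relI[OF x(2)] x show ?thesis by simp
qed

lemma trancl_graph_rel_coprodD:
  assumes "(p, q) \<in> (graph_rel (coprod_sset I X))\<^sup>+"
  shows "fst p = fst q \<and> (snd p, snd q) \<in> (graph_rel (X (fst p)))\<^sup>+"
  using assms
proof (induction rule: trancl_induct)
  case (step q r)
  with graph_rel_coprodD[OF step.hyps(2)] show ?case by (auto intro: trancl_into_trancl)
qed (use graph_rel_coprodD in fastforce)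

lemma sset_acyclic_coprod:
  assumes "\<forall>i\<in>I. sset_acyclic (X i)"
  shows "sset_acyclic (coprod_sset I X)"
  unfolding sset_acyclic_iff_acyclic
proof (rule acyclicI, intro allI notI)
  fix v assume v: "(v, v) \<in> (graph_rel (coprod_sset I X))\<^sup>+"
  then obtain w where "(v, w) \<in> graph_rel (coprod_sset I X)" by (blast dest: tranclD)
  then have "fst v \<in> I" using graph_rel_coprodD by blast
  with assms trancl_graph_rel_coprodD[OF v] show False
    by (auto simp: sset_acyclic_iff_acyclic acyclic_def)
qed

section \<open>Quotients of simplicial sets\<close>

lemma equiv_closure_on_subset:
  assumes "r \<subseteq> S \<times> S"
  shows "equiv_closure_on S r \<subseteq> S \<times> S"
proof -
  have "r \<union> r\<inverse> \<subseteq> S \<times> S" using assms by auto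
  then have "(r \<union> r\<inverse>)\<^sup>+ \<subseteq> S \<times> S" by (rule trancl_subset_Sigma)
  then show ?thesis unfolding equiv_closure_on_def by auto
qed

lemma equiv_closure_on_incl: "r \<subseteq> equiv_closure_on S r"
  unfolding equiv_closure_on_def by auto

lemma equiv_equiv_closure_on:
  assumes "r \<subseteq> S \<times> S"
  shows "equiv S (equiv_closure_on S r)"
proof (rule equivI)
  show "equiv_closure_on S r \<subseteq> S \<times> S" using equiv_closure_on_subset[OF assms] .
  show "refl_on S (equiv_closure_on S r)"
    using equiv_closure_on_subset[OF assms] by (auto simp: refl_on_def equiv_closure_on_def)
  have "((r \<union> r\<inverse>)\<^sup>+)\<inverse> = (r \<union> r\<inverse>)\<^sup>+"
    by (simp add: trancl_converse[symmetric] converse_Un sup_commute)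
  then show "sym (equiv_closure_on S r)"
    unfolding equiv_closure_on_def sym_conv_converse_eq by (simp add: converse_Un)
  show "trans (equiv_closure_on S r)"
    unfolding equiv_closure_on_def by (rule transI) (auto intro: trancl_trans)
qed

lemma equiv_closure_on_least:
  assumes "equiv S e" "r \<subseteq> e"
  shows "equiv_closure_on S r \<subseteq> e"
proof -
  obtain "refl_on S e" "sym e" "trans e" using assms(1) by (blast elim: equivE)
  have "r\<inverse> \<subseteq> e" using assms(2) \<open>sym e\<close> by (auto intro: symD)
  with assms(2) have "(r \<union> r\<inverse>)\<^sup>+ \<subseteq> e\<^sup>+" by (intro trancl_mono_subset) blast
  also have "e\<^sup>+ = e" using \<open>trans e\<close> by (rule trancl_id)
  finally have "(r \<union> r\<inverse>)\<^sup>+ \<subseteq> e" .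
  moreover have "Id_on S \<subseteq> e" using \<open>refl_on S e\<close> by (auto dest: refl_onD)
  ultimately show ?thesis unfolding equiv_closure_on_def by blast
qed

lemma equiv_on_inv_image:
  assumes "equiv T e" "f ` S \<subseteq> T"
  shows "equiv S {(a, b) \<in> S \<times> S. (f a, f b) \<in> e}"
proof -
  obtain "refl_on T e" "sym e" "trans e" using assms(1) by (blast elim: equivE)
  show ?thesis
  proof (rule equivI)
    show "refl_on S {(a, b) \<in> S \<times> S. (f a, f b) \<in> e}"
      using assms(2) \<open>refl_on T e\<close> unfolding refl_on_def by blast
    show "sym {(a, b) \<in> S \<times> S. (f a, f b) \<in> e}"
      using \<open>sym e\<close> unfolding sym_def by blast
    show "trans {(a, b) \<in> S \<times> S. (f a, f b) \<in> e}"
      using \<open>trans e\<close> unfolding trans_def by blast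
  qed blast
qed

text \<open>\<open>act_rel\<close> makes the representative chosen by \<open>SOME\<close> in \<open>quot_sset\<close> irrelevant.\<close>

locale sset_congruence =
  fixes W :: "'a sset" and R :: "nat \<Rightarrow> ('a \<times> 'a) set"
  assumes rel_in_cells: "R n \<subseteq> cells W n \<times> cells W n"
    and act_closed: "mono_map m n \<theta> \<Longrightarrow> x \<in> cells W n \<Longrightarrow> act W n \<theta> x \<in> cells W m"
    and act_rel: "mono_map m n \<theta> \<Longrightarrow> (a, b) \<in> R n \<Longrightarrow>
        (act W n \<theta> a, act W n \<theta> b) \<in> equiv_closure_on (cells W m) (R m)"
begin

abbreviation eqv :: "nat \<Rightarrow> ('a \<times> 'a) set" where
  "eqv n \<equiv> equiv_closure_on (cells W n) (R n)"

abbreviation Q :: "'a set sset" where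
  "Q \<equiv> quot_sset W R"

abbreviation nondeg_class :: "'a \<Rightarrow> bool" where
  "nondeg_class w \<equiv> \<forall>v \<in> cells W 0. (w, degen_edge W v) \<notin> eqv 1"

lemma equiv_eqv: "equiv (cells W n) (eqv n)"
  using equiv_equiv_closure_on[OF rel_in_cells] .

lemma rel_imp_eqv: "(a, b) \<in> R n \<Longrightarrow> (a, b) \<in> eqv n"
  using equiv_closure_on_incl by blast

lemma eqv_class_eq_iff:
  "a \<in> cells W n \<Longrightarrow> b \<in> cells W n \<Longrightarrow> eqv n `` {a} = eqv n `` {b} \<longleftrightarrow> (a, b) \<in> eqv n"
  using eq_equiv_class_iff[OF equiv_eqv] .

lemma act_eqv:
  assumes "mono_map m n \<theta>" "(a, b) \<in> eqv n"
  shows "(act W n \<theta> a, act W n \<theta> b) \<in> eqv m"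
proof -
  let ?e = "{(a, b) \<in> cells W n \<times> cells W n. (act W n \<theta> a, act W n \<theta> b) \<in> eqv m}"
  have "act W n \<theta> ` cells W n \<subseteq> cells W m" using act_closed[OF assms(1)] by blast
  then have "equiv (cells W n) ?e" by (rule equiv_on_inv_image[OF equiv_eqv])
  moreover have "R n \<subseteq> ?e" using rel_in_cells act_rel[OF assms(1)] by blast
  ultimately show ?thesis using equiv_closure_on_least assms(2) by blast
qed

lemma act_quot_class:
  assumes "mono_map m n \<theta>" "w \<in> cells W n"
  shows "act Q n \<theta> (eqv n `` {w}) = eqv m `` {act W n \<theta> w}"
proof -
  have len: "length \<theta> - 1 = m" using assms(1) by (simp add: mono_map_def)
  have "w \<in> eqv n `` {w}" using equiv_class_self[OF equiv_eqv assms(2)] .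
  then have "(w, SOME x. x \<in> eqv n `` {w}) \<in> eqv n" by (rule someI2) simp
  then have "(act W n \<theta> w, act W n \<theta> (SOME x. x \<in> eqv n `` {w})) \<in> eqv m"
    by (rule act_eqv[OF assms(1)])
  then show ?thesis using len equiv_class_eq[OF equiv_eqv] by (simp add: quot_sset_def)
qed

lemma cells_quot_iff: "c \<in> cells Q n \<longleftrightarrow> (\<exists>w \<in> cells W n. c = eqv n `` {w})"
  by (auto simp: quot_sset_def quotient_def)

lemma graph_rel_quotE:
  assumes "(c0, c1) \<in> graph_rel Q"
  obtains w where "w \<in> cells W 1" "c0 = eqv 0 `` {src_face W w}" "c1 = eqv 0 `` {tgt_face W w}"
    "nondeg_class w"
proof -
  from assms obtain c where c: "c \<in> cells Q 1" "c \<notin> degen_edge Q ` cells Q 0"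
    "c0 = src_face Q c" "c1 = tgt_face Q c" by (rule graph_relE)
  from c(1) obtain w where w: "w \<in> cells W 1" "c = eqv 1 `` {w}" by (auto simp: cells_quot_iff)
  have nondeg: "(w, degen_edge W v) \<notin> eqv 1" if v: "v \<in> cells W 0" for v
  proof
    assume "(w, degen_edge W v) \<in> eqv 1"
    then have "c = degen_edge Q (eqv 0 `` {v})"
      using w(2) act_quot_class[OF mono_map_degen v] equiv_class_eq[OF equiv_eqv] by simp
    moreover have "eqv 0 `` {v} \<in> cells Q 0" using v by (auto simp: cells_quot_iff)
    ultimately show False using c(2) by blast
  qed
  show thesis
  proof (rule that[OF w(1)])
    show "c0 = eqv 0 `` {src_face W w}"
      using c(3) w(2) act_quot_class[OF mono_map_src w(1)] by simp
    show "c1 = eqv 0 `` {tgt_face W w}"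
      using c(4) w(2) act_quot_class[OF mono_map_tgt w(1)] by simp
  qed (use nondeg in blast)
qed

lemma sset_acyclic_quot:
  assumes compat: "\<And>a b. (a, b) \<in> R 0 \<Longrightarrow> \<phi> a = \<phi> b"
    and "acyclic T"
    and edges: "\<And>w. w \<in> cells W 1 \<Longrightarrow> nondeg_class w \<Longrightarrow> (\<phi> (src_face W w), \<phi> (tgt_face W w)) \<in> T"
  shows "sset_acyclic Q"
  unfolding sset_acyclic_iff_acyclic
proof (rule acyclic_if_edges_in_trancl_image[OF \<open>acyclic T\<close>])
  define h where "h c = \<phi> (SOME x. x \<in> c)" for c
  have "eqv 0 \<subseteq> {(a, b) \<in> cells W 0 \<times> cells W 0. \<phi> a = \<phi> b}"
  proof (rule equiv_closure_on_least)
    show "equiv (cells W 0) {(a, b) \<in> cells W 0 \<times> cells W 0. \<phi> a = \<phi> b}"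
      by (rule equivI) (auto simp: refl_on_def sym_def trans_def)
    show "R 0 \<subseteq> {(a, b) \<in> cells W 0 \<times> cells W 0. \<phi> a = \<phi> b}"
      using rel_in_cells compat by blast
  qed
  moreover have "(SOME x. x \<in> eqv 0 `` {u}) \<in> eqv 0 `` {u}" if "u \<in> cells W 0" for u
    using equiv_class_self[OF equiv_eqv that] by (rule someI)
  ultimately have h_class: "h (eqv 0 `` {u}) = \<phi> u" if "u \<in> cells W 0" for u
    using that unfolding h_def by fastforce
  fix c0 c1 assume "(c0, c1) \<in> graph_rel Q"
  then obtain w where w: "w \<in> cells W 1" "c0 = eqv 0 `` {src_face W w}" "c1 = eqv 0 `` {tgt_face W w}"
    "nondeg_class w" by (rule graph_rel_quotE)
  have "(h c0, h c1) \<in> T"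
    using edges[OF w(1) w(4)] w(2,3) h_class act_closed[OF mono_map_src w(1)]
      act_closed[OF mono_map_tgt w(1)] by simp
  then show "(h c0, h c1) \<in> T\<^sup>+" by simp
qed

end

section \<open>Double mapping cylinders\<close>

definition ordinal_sum_rel :: "('a \<times> 'a) set \<Rightarrow> ('b \<times> 'b) set \<Rightarrow> (('a + 'b) \<times> ('a + 'b)) set" where
  "ordinal_sum_rel r s = map_prod Inl Inl ` r \<union> map_prod Inr Inr ` s \<union> range Inl \<times> range Inr"

lemma trancl_ordinal_sum_relD:
  assumes "(p, q) \<in> (ordinal_sum_rel r s)\<^sup>+"
  shows "(\<exists>a b. p = Inl a \<and> q = Inl b \<and> (a, b) \<in> r\<^sup>+) \<or> (\<exists>a b. p = Inr a \<and> q = Inr b \<and> (a, b) \<in> s\<^sup>+)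
    \<or> (\<exists>a b. p = Inl a \<and> q = Inr b)"
  using assms
proof (induction rule: trancl_induct)
  case (base q)
  then show ?case by (auto simp: ordinal_sum_rel_def)
next
  case (step q q')
  from step.hyps(2) consider (l) a b where "(a, b) \<in> r" "q = Inl a" "q' = Inl b"
    | (r) a b where "(a, b) \<in> s" "q = Inr a" "q' = Inr b"
    | (lr) a b where "q = Inl a" "q' = Inr b"
    by (auto simp: ordinal_sum_rel_def)
  then show ?case using step.IH by cases (auto intro: trancl_into_trancl)
qed

lemma acyclic_ordinal_sum_rel: "acyclic r \<Longrightarrow> acyclic s \<Longrightarrow> acyclic (ordinal_sum_rel r s)"
  unfolding acyclic_def by (blast dest: trancl_ordinal_sum_relD)

lemma mono_map_dcomp:
  assumes "mono_map n k l" "mono_map m n \<psi>"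
  shows "mono_map m k (dcomp l \<psi>)"
proof -
  have idx: "j < length l" if "j \<in> set \<psi>" for j
    using assms that by (auto simp: mono_map_def)
  have "sorted (map ((!) l) \<psi>)"
    unfolding sorted_iff_nth_mono
  proof (intro allI impI)
    fix i j assume ij: "i \<le> j" "j < length (map ((!) l) \<psi>)"
    then have "\<psi> ! i \<le> \<psi> ! j" "\<psi> ! j < length l"
      using assms(2) idx by (auto simp: mono_map_def sorted_nth_mono)
    then show "map ((!) l) \<psi> ! i \<le> map ((!) l) \<psi> ! j"
      using ij assms(1) by (auto simp: mono_map_def sorted_nth_mono)
  qed
  moreover have "\<forall>j\<in>set (map ((!) l) \<psi>). j \<le> k"
    using assms(1) idx by (auto simp: mono_map_def)
  ultimately show ?thesis using assms(2) by (simp add: mono_map_def dcomp_def)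
qed

lemma mono_map_replicate: "a \<le> k \<Longrightarrow> mono_map n k (replicate (Suc n) a)"
  by (simp add: mono_map_def del: replicate_Suc)

lemma dcomp_replicate:
  assumes "mono_map m n \<theta>"
  shows "dcomp (replicate (Suc n) a) \<theta> = replicate (Suc m) a"
proof -
  have "map ((!) (replicate (Suc n) a)) \<theta> = map (\<lambda>_. a) \<theta>"
    using assms by (intro map_cong) (auto simp: mono_map_def simp del: replicate_Suc)
  then show ?thesis using assms by (simp add: dcomp_def map_replicate_const mono_map_def del: replicate_Suc)
qed

lemma mono_map_1_1_cases: "mono_map 1 1 l \<Longrightarrow> l = [0, 0] \<or> l = [0, 1] \<or> l = [1, 1]"
  by (elim mono_map_1E) auto

definition cyl_total :: "'x sset \<Rightarrow> 'y sset \<Rightarrow> 'z sset \<Rightarrow> ('y + ('x \<times> nat list) + 'z) sset" where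
  "cyl_total X Y Z = coprod2_sset Y (coprod2_sset (prod2_sset X (stdsimplex 1)) Z)"

definition cyl_glue :: "'x sset \<Rightarrow> (nat \<Rightarrow> 'x \<Rightarrow> 'y) \<Rightarrow> (nat \<Rightarrow> 'x \<Rightarrow> 'z) \<Rightarrow> nat
    \<Rightarrow> (('y + ('x \<times> nat list) + 'z) \<times> ('y + ('x \<times> nat list) + 'z)) set" where
  "cyl_glue X f g n =
     {(Inr (Inl (x, replicate (Suc n) 0)), Inl (f n x)) | x. x \<in> cells X n}
     \<union> {(Inr (Inl (x, replicate (Suc n) 1)), Inr (Inr (g n x))) | x. x \<in> cells X n}"

lemma dmcyl_sset_eq_quot: "dmcyl_sset X Y Z f g = quot_sset (cyl_total X Y Z) (cyl_glue X f g)"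
  unfolding dmcyl_sset_def cyl_total_def cyl_glue_def ..

lemma act_cyl_total [simp]:
  "act (cyl_total X Y Z) n \<theta> (Inl y) = Inl (act Y n \<theta> y)"
  "act (cyl_total X Y Z) n \<theta> (Inr (Inl (x, l))) = Inr (Inl (act X n \<theta> x, dcomp l \<theta>))"
  "act (cyl_total X Y Z) n \<theta> (Inr (Inr z)) = Inr (Inr (act Z n \<theta> z))"
  by (simp_all add: cyl_total_def coprod2_sset_def prod2_sset_def stdsimplex_def)

lemma cells_cyl_total:
  "cells (cyl_total X Y Z) n =
     Inl ` cells Y n \<union> Inr ` (Inl ` (cells X n \<times> {l. mono_map n 1 l}) \<union> Inr ` cells Z n)"
  by (auto simp: cyl_total_def coprod2_sset_def prod2_sset_def stdsimplex_def)

lemma cells_cyl_totalI: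
  "y \<in> cells Y n \<Longrightarrow> Inl y \<in> cells (cyl_total X Y Z) n"
  "x \<in> cells X n \<Longrightarrow> mono_map n 1 l \<Longrightarrow> Inr (Inl (x, l)) \<in> cells (cyl_total X Y Z) n"
  "z \<in> cells Z n \<Longrightarrow> Inr (Inr z) \<in> cells (cyl_total X Y Z) n"
  unfolding cells_cyl_total by blast+

lemma cells_cyl_totalE:
  assumes "w \<in> cells (cyl_total X Y Z) n"
  obtains (base_Y) y where "y \<in> cells Y n" "w = Inl y"
    | (cylinder) x l where "x \<in> cells X n" "mono_map n 1 l" "w = Inr (Inl (x, l))"
    | (base_Z) z where "z \<in> cells Z n" "w = Inr (Inr z)"
  using assms unfolding cells_cyl_total by blast

text \<open>Collapsing the cylinder coordinate onto the end at which a vertex is glued.\<close>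

definition cyl_collapse :: "(nat \<Rightarrow> 'x \<Rightarrow> 'y) \<Rightarrow> (nat \<Rightarrow> 'x \<Rightarrow> 'z) \<Rightarrow> 'y + ('x \<times> nat list) + 'z \<Rightarrow> 'y + 'z" where
  "cyl_collapse f g w = (case w of
       Inl y \<Rightarrow> Inl y
     | Inr (Inl (x, l)) \<Rightarrow> (if l = [0] then Inl (f 0 x) else Inr (g 0 x))
     | Inr (Inr z) \<Rightarrow> Inr z)"

locale double_mapping_cylinder =
  fixes X :: "'x sset" and Y :: "'y sset" and Z :: "'z sset"
    and f :: "nat \<Rightarrow> 'x \<Rightarrow> 'y" and g :: "nat \<Rightarrow> 'x \<Rightarrow> 'z"
  assumes sset_X: "is_sset X" and sset_Y: "is_sset Y" and sset_Z: "is_sset Z"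
    and hom_f: "sset_hom X Y f" and hom_g: "sset_hom X Z g"
begin

lemma f_cells: "x \<in> cells X n \<Longrightarrow> f n x \<in> cells Y n"
  and f_act: "mono_map m n \<theta> \<Longrightarrow> x \<in> cells X n \<Longrightarrow> f m (act X n \<theta> x) = act Y n \<theta> (f n x)"
  and g_cells: "x \<in> cells X n \<Longrightarrow> g n x \<in> cells Z n"
  and g_act: "mono_map m n \<theta> \<Longrightarrow> x \<in> cells X n \<Longrightarrow> g m (act X n \<theta> x) = act Z n \<theta> (g n x)"
  using hom_f hom_g unfolding sset_hom_def by blast+

sublocale sset_congruence "cyl_total X Y Z" "cyl_glue X f g"
proof
  fix n
  show "cyl_glue X f g n \<subseteq> cells (cyl_total X Y Z) n \<times> cells (cyl_total X Y Z) n"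
    using f_cells g_cells mono_map_replicate[of 0 1 n] mono_map_replicate[of 1 1 n]
    by (auto simp: cyl_glue_def cells_cyl_total simp del: replicate_Suc)
next
  fix m n \<theta> w assume \<theta>: "mono_map m n \<theta>" and w: "w \<in> cells (cyl_total X Y Z) n"
  from w show "act (cyl_total X Y Z) n \<theta> w \<in> cells (cyl_total X Y Z) m"
  proof (cases rule: cells_cyl_totalE)
  qed (simp_all add: cells_cyl_totalI sset_act_closed[OF sset_X \<theta>] sset_act_closed[OF sset_Y \<theta>]
      sset_act_closed[OF sset_Z \<theta>] mono_map_dcomp[OF _ \<theta>])
next
  fix m n \<theta> a b assume \<theta>: "mono_map m n \<theta>" and "(a, b) \<in> cyl_glue X f g n"
  then have "(act (cyl_total X Y Z) n \<theta> a, act (cyl_total X Y Z) n \<theta> b) \<in> cyl_glue X f g m"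
    using f_act[OF \<theta>] g_act[OF \<theta>] sset_act_closed[OF sset_X \<theta>]
    by (auto simp: cyl_glue_def dcomp_replicate[OF \<theta>] simp del: replicate_Suc)
  then show "(act (cyl_total X Y Z) n \<theta> a, act (cyl_total X Y Z) n \<theta> b)
      \<in> equiv_closure_on (cells (cyl_total X Y Z) m) (cyl_glue X f g m)"
    using equiv_closure_on_incl by blast
qed

lemma graph_rel_Y_if_nondeg_class:
  assumes "e \<in> cells Y 1" "(w, Inl e) \<in> eqv 1" "nondeg_class w"
  shows "(src_face Y e, tgt_face Y e) \<in> graph_rel Y"
proof (rule graph_relI[OF assms(1)])
  show "e \<notin> degen_edge Y ` cells Y 0"
  proof
    assume "e \<in> degen_edge Y ` cells Y 0"
    then obtain v where v: "v \<in> cells Y 0" "e = degen_edge Y v" by blast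
    have "Inl v \<in> cells (cyl_total X Y Z) 0" using v(1) by (rule cells_cyl_totalI)
    with assms(3) have "(w, degen_edge (cyl_total X Y Z) (Inl v)) \<notin> eqv 1" by blast
    then show False using assms(2) v(2) by simp
  qed
qed

lemma graph_rel_Z_if_nondeg_class:
  assumes "e \<in> cells Z 1" "(w, Inr (Inr e)) \<in> eqv 1" "nondeg_class w"
  shows "(src_face Z e, tgt_face Z e) \<in> graph_rel Z"
proof (rule graph_relI[OF assms(1)])
  show "e \<notin> degen_edge Z ` cells Z 0"
  proof
    assume "e \<in> degen_edge Z ` cells Z 0"
    then obtain v where v: "v \<in> cells Z 0" "e = degen_edge Z v" by blast
    have "Inr (Inr v) \<in> cells (cyl_total X Y Z) 0" using v(1) by (rule cells_cyl_totalI)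
    with assms(3) have "(w, degen_edge (cyl_total X Y Z) (Inr (Inr v))) \<notin> eqv 1" by blast
    then show False using assms(2) v(2) by simp
  qed
qed

text \<open>Cylinder edges \<open>x \<times> [0, 0]\<close> and \<open>x \<times> [1, 1]\<close> are glued to \<open>f x\<close> and \<open>g x\<close>;
  only \<open>x \<times> [0, 1]\<close> runs from \<open>Y\<close> to \<open>Z\<close>.\<close>

lemma collapse_edge:
  assumes w: "w \<in> cells (cyl_total X Y Z) 1" and nd: "nondeg_class w"
  shows "(cyl_collapse f g (src_face (cyl_total X Y Z) w), cyl_collapse f g (tgt_face (cyl_total X Y Z) w))
    \<in> ordinal_sum_rel (graph_rel Y) (graph_rel Z)"
proof -
  have refl: "(w, w) \<in> eqv 1" using equiv_class_self[OF equiv_eqv w] by simp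
  from w show ?thesis
  proof (cases rule: cells_cyl_totalE)
    case (base_Y e)
    then show ?thesis using graph_rel_Y_if_nondeg_class[OF base_Y(1) _ nd] refl
      by (auto simp: cyl_collapse_def ordinal_sum_rel_def)
  next
    case (base_Z e)
    then show ?thesis using graph_rel_Z_if_nondeg_class[OF base_Z(1) _ nd] refl
      by (auto simp: cyl_collapse_def ordinal_sum_rel_def)
  next
    case (cylinder x l)
    from mono_map_1_1_cases[OF cylinder(2)] consider "l = [0, 0]" | "l = [0, 1]" | "l = [1, 1]" by blast
    then show ?thesis
    proof cases
      case 1
      then have "(w, Inl (f 1 x)) \<in> eqv 1"
        using cylinder by (intro rel_imp_eqv) (auto simp: cyl_glue_def numeral_2_eq_2)
      from graph_rel_Y_if_nondeg_class[OF f_cells[OF cylinder(1)] this nd] show ?thesis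
        using cylinder 1 f_act[OF mono_map_src cylinder(1)] f_act[OF mono_map_tgt cylinder(1)]
        by (auto simp: dcomp_def cyl_collapse_def ordinal_sum_rel_def)
    next
      case 3
      then have "(w, Inr (Inr (g 1 x))) \<in> eqv 1"
        using cylinder by (intro rel_imp_eqv) (auto simp: cyl_glue_def numeral_2_eq_2)
      from graph_rel_Z_if_nondeg_class[OF g_cells[OF cylinder(1)] this nd] show ?thesis
        using cylinder 3 g_act[OF mono_map_src cylinder(1)] g_act[OF mono_map_tgt cylinder(1)]
        by (auto simp: dcomp_def cyl_collapse_def ordinal_sum_rel_def)
    qed (use cylinder in \<open>auto simp: dcomp_def cyl_collapse_def ordinal_sum_rel_def\<close>)
  qed
qed

lemma sset_acyclic_dmcyl:
  assumes "sset_acyclic Y" "sset_acyclic Z"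
  shows "sset_acyclic (dmcyl_sset X Y Z f g)"
  unfolding dmcyl_sset_eq_quot
proof (rule sset_acyclic_quot[where \<phi> = "cyl_collapse f g", OF _ _ collapse_edge])
  show "acyclic (ordinal_sum_rel (graph_rel Y) (graph_rel Z))"
    using assms by (simp add: acyclic_ordinal_sum_rel sset_acyclic_iff_acyclic)
qed (auto simp: cyl_glue_def cyl_collapse_def)

end

section \<open>Filtered colimits\<close>

definition colim_rel :: "('o, 'm) small_cat \<Rightarrow> ('o \<Rightarrow> 'a sset) \<Rightarrow> ('m \<Rightarrow> nat \<Rightarrow> 'a \<Rightarrow> 'a) \<Rightarrow> nat
    \<Rightarrow> (('o \<times> 'a) \<times> ('o \<times> 'a)) set" where
  "colim_rel C D F n =
     {((c_dom C u, x), (c_cod C u, F u n x)) | u x. u \<in> c_arr C \<and> x \<in> cells (D (c_dom C u)) n}"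

lemma colim_sset_eq_quot: "colim_sset C D F = quot_sset (coprod_sset (c_obj C) D) (colim_rel C D F)"
  unfolding colim_sset_def colim_rel_def ..

locale filtered_diagram =
  fixes C :: "('o, 'm) small_cat" and D :: "'o \<Rightarrow> 'a sset" and F :: "'m \<Rightarrow> nat \<Rightarrow> 'a \<Rightarrow> 'a"
  assumes cat: "is_cat C" and filtered: "filtered_cat C" and diagram: "sset_diagram C D F"
begin

lemma dom_in_obj: "u \<in> c_arr C \<Longrightarrow> c_dom C u \<in> c_obj C"
  and cod_in_obj: "u \<in> c_arr C \<Longrightarrow> c_cod C u \<in> c_obj C"
  using cat unfolding is_cat_def by blast+

lemma id_arr: "i \<in> c_obj C \<Longrightarrow> c_id C i \<in> c_arr C \<and> c_dom C (c_id C i) = i \<and> c_cod C (c_id C i) = i"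
  using cat unfolding is_cat_def by blast

lemma comp_arr: "u \<in> c_arr C \<Longrightarrow> v \<in> c_arr C \<Longrightarrow> c_cod C u = c_dom C v \<Longrightarrow>
    c_comp C v u \<in> c_arr C \<and> c_dom C (c_comp C v u) = c_dom C u \<and> c_cod C (c_comp C v u) = c_cod C v"
  using cat unfolding is_cat_def by blast

lemma comp_assoc: "u \<in> c_arr C \<Longrightarrow> v \<in> c_arr C \<Longrightarrow> w \<in> c_arr C \<Longrightarrow> c_cod C u = c_dom C v \<Longrightarrow>
    c_cod C v = c_dom C w \<Longrightarrow> c_comp C w (c_comp C v u) = c_comp C (c_comp C w v) u"
  using cat unfolding is_cat_def by blast

lemma sset_D: "i \<in> c_obj C \<Longrightarrow> is_sset (D i)"
  using diagram unfolding sset_diagram_def by blast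

lemma hom_F: "u \<in> c_arr C \<Longrightarrow> sset_hom (D (c_dom C u)) (D (c_cod C u)) (F u)"
  using diagram unfolding sset_diagram_def by blast

lemma F_cells: "u \<in> c_arr C \<Longrightarrow> x \<in> cells (D (c_dom C u)) n \<Longrightarrow> F u n x \<in> cells (D (c_cod C u)) n"
  using hom_F unfolding sset_hom_def by blast

lemma F_act: "u \<in> c_arr C \<Longrightarrow> mono_map m n \<theta> \<Longrightarrow> x \<in> cells (D (c_dom C u)) n \<Longrightarrow>
    F u m (act (D (c_dom C u)) n \<theta> x) = act (D (c_cod C u)) n \<theta> (F u n x)"
  using hom_F unfolding sset_hom_def by blast

lemma F_id: "i \<in> c_obj C \<Longrightarrow> x \<in> cells (D i) n \<Longrightarrow> F (c_id C i) n x = x"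
  using diagram unfolding sset_diagram_def by blast

lemma F_comp: "u \<in> c_arr C \<Longrightarrow> v \<in> c_arr C \<Longrightarrow> c_cod C u = c_dom C v \<Longrightarrow>
    x \<in> cells (D (c_dom C u)) n \<Longrightarrow> F (c_comp C v u) n x = F v n (F u n x)"
  using diagram unfolding sset_diagram_def by blast

lemma filtered_coequalize: "u \<in> c_arr C \<Longrightarrow> v \<in> c_arr C \<Longrightarrow> c_dom C u = c_dom C v \<Longrightarrow>
    c_cod C u = c_cod C v \<Longrightarrow> \<exists>w\<in>c_arr C. c_dom C w = c_cod C u \<and> c_comp C w u = c_comp C w v"
  using filtered unfolding filtered_cat_def by blast

lemma filtered_complete_span:
  assumes "u \<in> c_arr C" "v \<in> c_arr C" "c_dom C u = c_dom C v"
  obtains a b where "a \<in> c_arr C" "b \<in> c_arr C" "c_dom C a = c_cod C u" "c_dom C b = c_cod C v"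
    "c_cod C a = c_cod C b" "c_comp C a u = c_comp C b v"
proof -
  obtain a b where ab: "a \<in> c_arr C" "b \<in> c_arr C" "c_dom C a = c_cod C u" "c_dom C b = c_cod C v"
    "c_cod C a = c_cod C b"
    using filtered cod_in_obj[OF assms(1)] cod_in_obj[OF assms(2)] unfolding filtered_cat_def by metis
  obtain w where w: "w \<in> c_arr C" "c_dom C w = c_cod C a" "c_comp C w (c_comp C a u) = c_comp C w (c_comp C b v)"
    using filtered_coequalize[of "c_comp C a u" "c_comp C b v"] comp_arr[OF assms(1) ab(1)]
      comp_arr[OF assms(2) ab(2)] ab assms(3) by auto
  show thesis
  proof (rule that[of "c_comp C w a" "c_comp C w b"])
    show "c_comp C (c_comp C w a) u = c_comp C (c_comp C w b) v"
      using w(3) comp_assoc[OF assms(1) ab(1) w(1)] comp_assoc[OF assms(2) ab(2) w(1)] ab w(2) by simp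
  qed (use comp_arr[OF ab(1) w(1)] comp_arr[OF ab(2) w(1)] ab w in auto)
qed

abbreviation W :: "('o \<times> 'a) sset" where
  "W \<equiv> coprod_sset (c_obj C) D"

lemma cells_W: "cells W n = Sigma (c_obj C) (\<lambda>i. cells (D i) n)"
  by (simp add: coprod_sset_def)

lemma act_W [simp]: "act W n \<theta> (i, x) = (i, act (D i) n \<theta> x)"
  by (simp add: coprod_sset_def)

sublocale sset_congruence W "colim_rel C D F"
proof
  fix n show "colim_rel C D F n \<subseteq> cells W n \<times> cells W n"
    unfolding colim_rel_def cells_W using dom_in_obj cod_in_obj F_cells by auto
next
  fix m n \<theta> x assume "mono_map m n \<theta>" "x \<in> cells W n"
  then show "act W n \<theta> x \<in> cells W m"
    unfolding cells_W using sset_act_closed[OF sset_D] by auto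
next
  fix m n \<theta> a b assume \<theta>: "mono_map m n \<theta>" and "(a, b) \<in> colim_rel C D F n"
  then obtain u x where u: "u \<in> c_arr C" "x \<in> cells (D (c_dom C u)) n"
    and ab: "a = (c_dom C u, x)" "b = (c_cod C u, F u n x)"
    unfolding colim_rel_def by blast
  have "(act W n \<theta> a, act W n \<theta> b) \<in> colim_rel C D F m"
    using u ab F_act[OF u(1) \<theta> u(2)] sset_act_closed[OF sset_D[OF dom_in_obj[OF u(1)]] \<theta> u(2)]
    unfolding colim_rel_def by auto
  then show "(act W n \<theta> a, act W n \<theta> b) \<in> equiv_closure_on (cells W m) (colim_rel C D F m)"
    using equiv_closure_on_incl by blast
qed

lemma eqv_class_F:
  assumes "u \<in> c_arr C" "x \<in> cells (D (c_dom C u)) n"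
  shows "eqv n `` {(c_dom C u, x)} = eqv n `` {(c_cod C u, F u n x)}"
proof -
  have "((c_dom C u, x), (c_cod C u, F u n x)) \<in> colim_rel C D F n"
    unfolding colim_rel_def using assms by blast
  then show ?thesis by (intro equiv_class_eq[OF equiv_eqv] rel_imp_eqv)
qed

text \<open>Two simplices of the coproduct are identified in the colimit iff they become equal at
  some later stage; only the forward implication is needed.\<close>

definition eventually_equal :: "nat \<Rightarrow> 'o \<times> 'a \<Rightarrow> 'o \<times> 'a \<Rightarrow> bool" where
  "eventually_equal n p q \<longleftrightarrow> (\<exists>u\<in>c_arr C. \<exists>v\<in>c_arr C. c_dom C u = fst p \<and> c_dom C v = fst q \<and>
      c_cod C u = c_cod C v \<and> F u n (snd p) = F v n (snd q))"

lemma eventually_equal_trans: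
  assumes "eventually_equal n p q" "eventually_equal n q r" "p \<in> cells W n" "q \<in> cells W n" "r \<in> cells W n"
  shows "eventually_equal n p r"
proof -
  obtain u1 v1 where uv1: "u1 \<in> c_arr C" "v1 \<in> c_arr C" "c_dom C u1 = fst p" "c_dom C v1 = fst q"
    "c_cod C u1 = c_cod C v1" "F u1 n (snd p) = F v1 n (snd q)"
    using assms(1) unfolding eventually_equal_def by blast
  obtain u2 v2 where uv2: "u2 \<in> c_arr C" "v2 \<in> c_arr C" "c_dom C u2 = fst q" "c_dom C v2 = fst r"
    "c_cod C u2 = c_cod C v2" "F u2 n (snd q) = F v2 n (snd r)"
    using assms(2) unfolding eventually_equal_def by blast
  obtain a b where ab: "a \<in> c_arr C" "b \<in> c_arr C" "c_dom C a = c_cod C v1" "c_dom C b = c_cod C u2"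
    "c_cod C a = c_cod C b" "c_comp C a v1 = c_comp C b u2"
    using filtered_complete_span[OF uv1(2) uv2(1)] uv1(4) uv2(3) by metis
  have cells: "snd p \<in> cells (D (fst p)) n" "snd q \<in> cells (D (fst q)) n" "snd r \<in> cells (D (fst r)) n"
    using assms(3-5) unfolding cells_W by auto
  have "F (c_comp C a u1) n (snd p) = F a n (F v1 n (snd q))"
    using F_comp[OF uv1(1) ab(1)] uv1 ab cells by simp
  also have "\<dots> = F (c_comp C b u2) n (snd q)"
    using F_comp[OF uv1(2) ab(1)] uv1 ab cells by simp
  also have "\<dots> = F (c_comp C b v2) n (snd r)"
    using F_comp[OF uv2(1) ab(2)] F_comp[OF uv2(2) ab(2)] uv2 ab cells by simp
  finally have eq: "F (c_comp C a u1) n (snd p) = F (c_comp C b v2) n (snd r)" .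
  have "c_comp C a u1 \<in> c_arr C" "c_dom C (c_comp C a u1) = fst p" "c_cod C (c_comp C a u1) = c_cod C a"
    using comp_arr[OF uv1(1) ab(1)] uv1 ab by auto
  moreover have "c_comp C b v2 \<in> c_arr C" "c_dom C (c_comp C b v2) = fst r"
    "c_cod C (c_comp C b v2) = c_cod C a"
    using comp_arr[OF uv2(2) ab(2)] uv2 ab by auto
  ultimately show ?thesis
    unfolding eventually_equal_def using eq by (intro bexI[of _ "c_comp C a u1"] bexI[of _ "c_comp C b v2"]) auto
qed

lemma eventually_equal_refl: "p \<in> cells W n \<Longrightarrow> eventually_equal n p p"
  unfolding eventually_equal_def cells_W using id_arr F_id by fastforce

lemma eventually_equal_sym: "eventually_equal n p q \<Longrightarrow> eventually_equal n q p"
  unfolding eventually_equal_def by metis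

lemma equiv_eventually_equal: "equiv (cells W n) {(p, q) \<in> cells W n \<times> cells W n. eventually_equal n p q}"
proof (rule equivI)
  show "refl_on (cells W n) {(p, q) \<in> cells W n \<times> cells W n. eventually_equal n p q}"
    by (auto simp: refl_on_def intro: eventually_equal_refl)
  show "sym {(p, q) \<in> cells W n \<times> cells W n. eventually_equal n p q}"
    by (auto simp: sym_def intro: eventually_equal_sym)
  show "trans {(p, q) \<in> cells W n \<times> cells W n. eventually_equal n p q}"
  proof (rule transI)
    fix p q r
    assume "(p, q) \<in> {(p, q) \<in> cells W n \<times> cells W n. eventually_equal n p q}"
      and "(q, r) \<in> {(p, q) \<in> cells W n \<times> cells W n. eventually_equal n p q}"
    then show "(p, r) \<in> {(p, q) \<in> cells W n \<times> cells W n. eventually_equal n p q}"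
      using eventually_equal_trans[of n p q r] by auto
  qed
qed blast

lemma eqv_imp_eventually_equal:
  assumes "(p, q) \<in> eqv n"
  shows "eventually_equal n p q"
proof -
  have "colim_rel C D F n \<subseteq> {(p, q) \<in> cells W n \<times> cells W n. eventually_equal n p q}"
  proof (rule subrelI)
    fix p q assume pq: "(p, q) \<in> colim_rel C D F n"
    then obtain u x where u: "u \<in> c_arr C" "x \<in> cells (D (c_dom C u)) n"
      "p = (c_dom C u, x)" "q = (c_cod C u, F u n x)"
      unfolding colim_rel_def by blast
    have "eventually_equal n p q"
      unfolding eventually_equal_def using u id_arr[OF cod_in_obj[OF u(1)]]
        F_id[OF cod_in_obj[OF u(1)] F_cells[OF u(1,2)]]
      by (intro bexI[OF _ u(1)] bexI[of _ "c_id C (c_cod C u)"]) auto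
    then show "(p, q) \<in> {(p, q) \<in> cells W n \<times> cells W n. eventually_equal n p q}"
      using pq rel_in_cells by blast
  qed
  with assms show ?thesis using equiv_closure_on_least[OF equiv_eventually_equal] by blast
qed

lemma eventually_equal_same_obj:
  assumes "eventually_equal n (i, a) (i, b)" "a \<in> cells (D i) n" "b \<in> cells (D i) n"
  obtains z where "z \<in> c_arr C" "c_dom C z = i" "F z n a = F z n b"
proof -
  obtain u v where uv: "u \<in> c_arr C" "v \<in> c_arr C" "c_dom C u = i" "c_dom C v = i"
    "c_cod C u = c_cod C v" "F u n a = F v n b"
    using assms(1) unfolding eventually_equal_def by auto
  obtain w where w: "w \<in> c_arr C" "c_dom C w = c_cod C u" "c_comp C w u = c_comp C w v"
    using filtered_coequalize[OF uv(1,2)] uv by auto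
  have "F (c_comp C w u) n a = F (c_comp C w u) n b"
    using F_comp[OF uv(1) w(1)] F_comp[OF uv(2) w(1)] w uv assms(2,3) by simp
  then show thesis using that comp_arr[OF uv(1) w(1)] w uv by auto
qed

lemma eventually_equal_if_class_eq:
  "p \<in> cells W n \<Longrightarrow> q \<in> cells W n \<Longrightarrow> eqv n `` {p} = eqv n `` {q} \<Longrightarrow> eventually_equal n p q"
  using eqv_class_eq_iff eqv_imp_eventually_equal by blast

lemma graph_rel_colim_liftE:
  assumes "(eqv 0 `` {(m, b)}, c) \<in> graph_rel Q" "m \<in> c_obj C" "b \<in> cells (D m) 0"
  obtains u b' where "u \<in> c_arr C" "c_dom C u = m" "b' \<in> cells (D (c_cod C u)) 0"
    "(F u 0 b, b') \<in> simplex1_rel (D (c_cod C u))" "c = eqv 0 `` {(c_cod C u, b')}"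
proof -
  from assms(1) obtain w where w: "w \<in> cells W 1" "eqv 0 `` {(m, b)} = eqv 0 `` {src_face W w}"
    "c = eqv 0 `` {tgt_face W w}" by (rule graph_rel_quotE)
  obtain i e where ie: "w = (i, e)" "i \<in> c_obj C" "e \<in> cells (D i) 1"
    using w(1) unfolding cells_W by auto
  have faces: "src_face (D i) e \<in> cells (D i) 0" "tgt_face (D i) e \<in> cells (D i) 0"
    using sset_faces_closed[OF sset_D[OF ie(2)] ie(3)] by auto
  have "(m, b) \<in> cells W 0" "(i, src_face (D i) e) \<in> cells W 0"
    using assms(2,3) ie(2) faces(1) unfolding cells_W by auto
  moreover have "eqv 0 `` {(m, b)} = eqv 0 `` {(i, src_face (D i) e)}" using w(2) ie(1) by simp
  ultimately have "eventually_equal 0 (m, b) (i, src_face (D i) e)" by (rule eventually_equal_if_class_eq)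
  then obtain u v where uv: "u \<in> c_arr C" "v \<in> c_arr C" "c_dom C u = m" "c_dom C v = i"
    "c_cod C u = c_cod C v" "F u 0 b = F v 0 (src_face (D i) e)"
    unfolding eventually_equal_def by auto
  show thesis
  proof (rule that[OF uv(1,3)])
    show "F v 0 (tgt_face (D i) e) \<in> cells (D (c_cod C u)) 0"
      using F_cells[OF uv(2)] faces(2) uv(4,5) by simp
    show "(F u 0 b, F v 0 (tgt_face (D i) e)) \<in> simplex1_rel (D (c_cod C u))"
      using F_cells[OF uv(2)] F_act[OF uv(2) mono_map_src] F_act[OF uv(2) mono_map_tgt] ie(3) uv(4-6)
      unfolding simplex1_rel_def edge_rel_def by auto
    show "c = eqv 0 `` {(c_cod C u, F v 0 (tgt_face (D i) e))}"
      using w(3) ie(1) eqv_class_F[OF uv(2)] faces(2) uv(4,5) by simp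
  qed
qed

lemma rtrancl_graph_rel_colim_lift:
  assumes "(eqv 0 `` {(k, a)}, c) \<in> (graph_rel Q)\<^sup>*" "k \<in> c_obj C" "a \<in> cells (D k) 0"
  shows "\<exists>u\<in>c_arr C. \<exists>b. c_dom C u = k \<and> b \<in> cells (D (c_cod C u)) 0 \<and>
           (F u 0 a, b) \<in> (simplex1_rel (D (c_cod C u)))\<^sup>* \<and> c = eqv 0 `` {(c_cod C u, b)}"
  using assms(1)
proof (induction rule: rtrancl_induct)
  case base
  show ?case using id_arr[OF assms(2)] F_id[OF assms(2,3)] assms(3)
    by (intro bexI[of _ "c_id C k"] exI[of _ a]) auto
next
  case (step c c')
  from step.IH obtain u b where u: "u \<in> c_arr C" "c_dom C u = k" "b \<in> cells (D (c_cod C u)) 0"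
    "(F u 0 a, b) \<in> (simplex1_rel (D (c_cod C u)))\<^sup>*" "c = eqv 0 `` {(c_cod C u, b)}" by blast
  have "(eqv 0 `` {(c_cod C u, b)}, c') \<in> graph_rel Q" using step.hyps(2) u(5) by simp
  then obtain v b' where v: "v \<in> c_arr C" "c_dom C v = c_cod C u"
    "b' \<in> cells (D (c_cod C v)) 0" "(F v 0 b, b') \<in> simplex1_rel (D (c_cod C v))"
    "c' = eqv 0 `` {(c_cod C v, b')}"
    using cod_in_obj[OF u(1)] u(3) by (rule graph_rel_colim_liftE)
  have vu: "c_comp C v u \<in> c_arr C" "c_dom C (c_comp C v u) = k" "c_cod C (c_comp C v u) = c_cod C v"
    using comp_arr[OF u(1) v(1)] v(2) u(2) by auto
  have "(F v 0 (F u 0 a), F v 0 b) \<in> (simplex1_rel (D (c_cod C v)))\<^sup>*"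
    using sset_hom_rtrancl_simplex1_rel[OF hom_F[OF v(1)]] u(4) v(2) by simp
  with v(4) have "(F (c_comp C v u) 0 a, b') \<in> (simplex1_rel (D (c_cod C v)))\<^sup>*"
    using F_comp[OF u(1) v(1)] v(2) u(2) assms(3) by (simp add: rtrancl_into_rtrancl)
  then show ?case using vu v(3,5) by (intro bexI[OF _ vu(1)] exI[of _ b']) simp
qed

lemma nondeg_edge_image:
  assumes "i \<in> c_obj C" "e \<in> cells (D i) 1"
    and nondeg: "nondeg_class (i, e)"
    and "t \<in> c_arr C" "c_dom C t = i"
  shows "F t 1 e \<in> nondeg_edges (D (c_cod C t))"
proof -
  let ?k = "c_cod C t"
  have E: "F t 1 e \<in> cells (D ?k) 1" using F_cells[OF assms(4)] assms(2,5) by simp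
  have "F t 1 e \<notin> degen_edge (D ?k) ` cells (D ?k) 0"
  proof
    assume "F t 1 e \<in> degen_edge (D ?k) ` cells (D ?k) 0"
    then obtain v where v: "v \<in> cells (D ?k) 0" "F t 1 e = degen_edge (D ?k) v" by blast
    have "eqv 1 `` {(i, e)} = eqv 1 `` {(?k, F t 1 e)}"
      using eqv_class_F[OF assms(4)] assms(2,5) by simp
    moreover have "(i, e) \<in> cells W 1" "(?k, F t 1 e) \<in> cells W 1"
      using assms(1,2) E cod_in_obj[OF assms(4)] unfolding cells_W by auto
    ultimately have "((i, e), degen_edge W (?k, v)) \<in> eqv 1" using eqv_class_eq_iff v(2) by simp
    moreover have "(?k, v) \<in> cells W 0" using v(1) cod_in_obj[OF assms(4)] unfolding cells_W by simp
    ultimately show False using nondeg by blast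
  qed
  then show ?thesis using E by (simp add: nondeg_edges_def)
qed

lemma sset_acyclic_colim:
  assumes "\<forall>i\<in>c_obj C. sset_acyclic (D i)"
  shows "sset_acyclic (colim_sset C D F)"
  unfolding colim_sset_eq_quot sset_acyclic_iff_acyclic acyclic_iff_no_return
proof (clarify)
  fix c y assume cy: "(c, y) \<in> graph_rel Q" and yc: "(y, c) \<in> (graph_rel Q)\<^sup>*"
  from cy obtain w where w: "w \<in> cells W 1" "c = eqv 0 `` {src_face W w}" "y = eqv 0 `` {tgt_face W w}"
    and nondeg: "nondeg_class w" by (rule graph_rel_quotE)
  obtain i e where ie: "w = (i, e)" "i \<in> c_obj C" "e \<in> cells (D i) 1"
    using w(1) unfolding cells_W by auto
  let ?s = "src_face (D i) e" and ?t = "tgt_face (D i) e"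
  have faces: "?s \<in> cells (D i) 0" "?t \<in> cells (D i) 0"
    using sset_faces_closed[OF sset_D[OF ie(2)] ie(3)] by auto
  have "(eqv 0 `` {(i, ?t)}, c) \<in> (graph_rel Q)\<^sup>*" using yc w(3) ie(1) by simp
  then obtain u b where u: "u \<in> c_arr C" "c_dom C u = i" "b \<in> cells (D (c_cod C u)) 0"
    "(F u 0 ?t, b) \<in> (simplex1_rel (D (c_cod C u)))\<^sup>*" "c = eqv 0 `` {(c_cod C u, b)}"
    using rtrancl_graph_rel_colim_lift[OF _ ie(2) faces(2)] by blast
  have s_u: "F u 0 ?s \<in> cells (D (c_cod C u)) 0" using F_cells[OF u(1)] faces(1) u(2) by simp
  have "(c_cod C u, b) \<in> cells W 0" "(c_cod C u, F u 0 ?s) \<in> cells W 0"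
    using u(3) s_u cod_in_obj[OF u(1)] unfolding cells_W by auto
  moreover have "eqv 0 `` {(c_cod C u, b)} = eqv 0 `` {(c_cod C u, F u 0 ?s)}"
    using u(5) w(2) ie(1) eqv_class_F[OF u(1), unfolded u(2), OF faces(1)] by simp
  ultimately have "eventually_equal 0 (c_cod C u, b) (c_cod C u, F u 0 ?s)"
    by (rule eventually_equal_if_class_eq)
  then obtain z where z: "z \<in> c_arr C" "c_dom C z = c_cod C u" "F z 0 b = F z 0 (F u 0 ?s)"
    using u(3) s_u by (rule eventually_equal_same_obj)
  let ?k = "c_cod C z" and ?zu = "c_comp C z u"
  have zu: "?zu \<in> c_arr C" "c_dom C ?zu = i" "c_cod C ?zu = ?k"
    and F_zu: "\<And>n x. x \<in> cells (D i) n \<Longrightarrow> F ?zu n x = F z n (F u n x)"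
    using comp_arr[OF u(1) z(1)] F_comp[OF u(1) z(1)] z(2) u(2) by auto
  have "(F z 0 (F u 0 ?t), F z 0 b) \<in> (simplex1_rel (D ?k))\<^sup>*"
    using sset_hom_rtrancl_simplex1_rel[OF hom_F[OF z(1)]] u(4) z(2) by simp
  moreover have "src_face (D ?k) (F ?zu 1 e) = F z 0 b"
    using F_act[OF zu(1) mono_map_src, unfolded zu(2,3), OF ie(3)] F_zu[OF faces(1)] z(3) by simp
  moreover have "tgt_face (D ?k) (F ?zu 1 e) = F z 0 (F u 0 ?t)"
    using F_act[OF zu(1) mono_map_tgt, unfolded zu(2,3), OF ie(3)] F_zu[OF faces(2)] by simp
  ultimately have "(tgt_face (D ?k) (F ?zu 1 e), src_face (D ?k) (F ?zu 1 e)) \<in> (simplex1_rel (D ?k))\<^sup>*"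
    by simp
  moreover have "F ?zu 1 e \<in> nondeg_edges (D ?k)"
    using nondeg_edge_image[OF ie(2,3) _ zu(1,2)] nondeg unfolding ie(1) zu(3) .
  moreover have "sset_acyclic (D ?k)" using assms cod_in_obj[OF z(1)] by blast
  ultimately show False
    using sset_acyclic_iff_no_return[OF sset_D[OF cod_in_obj[OF z(1)]]] by blast
qed

end

theorem mainTheorem1:
  shows "(\<forall>n::nat. sset_acyclic (stdsimplex n))
   \<and> (\<forall>(X::'a sset) Y. is_sset X \<and> sset_acyclic X \<and> sub_sset Y X \<longrightarrow> sset_acyclic Y)
   \<and> (\<forall>(I::'i set) (X::'i \<Rightarrow> 'b sset).
        (\<forall>i\<in>I. is_sset (X i) \<and> sset_acyclic (X i)) \<longrightarrow> sset_acyclic (prod_sset I X))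
   \<and> (\<forall>(C::('o, 'm) small_cat) (D::'o \<Rightarrow> 'c sset) F.
        is_cat C \<and> sset_diagram C D F \<and> (\<forall>i\<in>c_obj C. sset_acyclic (D i))
        \<longrightarrow> sset_acyclic (lim_sset C D F))
   \<and> (\<forall>(I::'j set) (X::'j \<Rightarrow> 'd sset).
        (\<forall>i\<in>I. is_sset (X i) \<and> sset_acyclic (X i)) \<longrightarrow> sset_acyclic (coprod_sset I X))
   \<and> (\<forall>(X::'x sset) (Y::'y sset) (Z::'z sset) f g.
        is_sset X \<and> is_sset Y \<and> is_sset Z \<and> sset_acyclic Y \<and> sset_acyclic Z \<and>
        sset_hom X Y f \<and> sset_hom X Z g \<longrightarrow> sset_acyclic (dmcyl_sset X Y Z f g))
   \<and> (\<forall>(C::('p, 'q) small_cat) (D::'p \<Rightarrow> 'e sset) F.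
        is_cat C \<and> filtered_cat C \<and> sset_diagram C D F \<and> (\<forall>i\<in>c_obj C. sset_acyclic (D i))
        \<longrightarrow> sset_acyclic (colim_sset C D F))"
proof (intro conjI allI impI)
  show "sset_acyclic (stdsimplex n)" for n by (rule acyclic_stdsimplex)
next
  fix X :: "'a sset" and Y
  assume "is_sset X \<and> sset_acyclic X \<and> sub_sset Y X"
  then show "sset_acyclic Y" using sset_acyclic_sub_sset by blast
next
  fix I :: "'i set" and X :: "'i \<Rightarrow> 'b sset"
  assume "\<forall>i\<in>I. is_sset (X i) \<and> sset_acyclic (X i)"
  then show "sset_acyclic (prod_sset I X)" by (rule sset_acyclic_prod)
next
  fix C :: "('o, 'm) small_cat" and D :: "'o \<Rightarrow> 'c sset" and F
  assume "is_cat C \<and> sset_diagram C D F \<and> (\<forall>i\<in>c_obj C. sset_acyclic (D i))"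
  then show "sset_acyclic (lim_sset C D F)" using sset_acyclic_lim by blast
next
  fix I :: "'j set" and X :: "'j \<Rightarrow> 'd sset"
  assume "\<forall>i\<in>I. is_sset (X i) \<and> sset_acyclic (X i)"
  then show "sset_acyclic (coprod_sset I X)" by (simp add: sset_acyclic_coprod)
next
  fix X :: "'x sset" and Y :: "'y sset" and Z :: "'z sset" and f g
  assume "is_sset X \<and> is_sset Y \<and> is_sset Z \<and> sset_acyclic Y \<and> sset_acyclic Z \<and>
    sset_hom X Y f \<and> sset_hom X Z g"
  then show "sset_acyclic (dmcyl_sset X Y Z f g)"
    by (intro double_mapping_cylinder.sset_acyclic_dmcyl) (simp_all add: double_mapping_cylinder_def)
next
  fix C :: "('p, 'q) small_cat" and D :: "'p \<Rightarrow> 'e sset" and F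
  assume "is_cat C \<and> filtered_cat C \<and> sset_diagram C D F \<and> (\<forall>i\<in>c_obj C. sset_acyclic (D i))"
  then show "sset_acyclic (colim_sset C D F)"
    by (intro filtered_diagram.sset_acyclic_colim) (simp_all add: filtered_diagram_def)
qed

end
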